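(* Let $q$ be a prime and $b,c$ positive integers. (1) If $\frac{b+c}{\gcd(b,c)}=q$, then the threshold is $n_0(b,c;q)=\gcd(b,c)$. (2) If $\gcd(b,c)=1$ and $b+c=q^2$, then $n_0(b,c;q)=q+1$.
   Context: The Hamming graph $H(n,q)$ has vertex set $\mathbb{Z}_q^n$, two vertices adjacent iff they differ in exactly one coordinate. A $(b,c)$-coloring of $H(n,q)$ is a surjective map onto $\{1,2\}$ in which each color-1 vertex has exactly $b$ neighbours of color 2 and each color-2 vertex has exactly $c$ neighbours of color 1. The threshold $n_0(b,c;q)$ is the least $n$ such that a $(b,c)$-coloring of $H(n,q)$ exists (such colorings then exist for all $n\ge n_0$ and for no smaller $n$). *)

theory Defs
  imports Main "HOL-Computational_Algebra.Primes"
begin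

definition hamming_vertices :: "nat \<Rightarrow> nat \<Rightarrow> (nat \<Rightarrow> nat) set" where
  "hamming_vertices n q = {x. (\<forall>i<n. x i < q) \<and> (\<forall>i\<ge>n. x i = 0)}"

definition hamming_adj :: "nat \<Rightarrow> (nat \<Rightarrow> nat) \<Rightarrow> (nat \<Rightarrow> nat) \<Rightarrow> bool" where
  "hamming_adj n x y \<longleftrightarrow> card {i. i < n \<and> x i \<noteq> y i} = 1"

definition is_bc_coloring :: "nat \<Rightarrow> nat \<Rightarrow> nat \<Rightarrow> nat \<Rightarrow> ((nat \<Rightarrow> nat) \<Rightarrow> nat) \<Rightarrow> bool" where
  "is_bc_coloring b c n q f \<longleftrightarrow>
     f ` hamming_vertices n q = {1, 2} \<and>
     (\<forall>x\<in>hamming_vertices n q. f x = 1 \<longrightarrow>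
        card {y\<in>hamming_vertices n q. hamming_adj n x y \<and> f y = 2} = b) \<and>
     (\<forall>x\<in>hamming_vertices n q. f x = 2 \<longrightarrow>
        card {y\<in>hamming_vertices n q. hamming_adj n x y \<and> f y = 1} = c)"

definition has_bc_coloring :: "nat \<Rightarrow> nat \<Rightarrow> nat \<Rightarrow> nat \<Rightarrow> bool" where
  "has_bc_coloring b c n q \<longleftrightarrow> (\<exists>f. is_bc_coloring b c n q f)"

definition threshold :: "nat \<Rightarrow> nat \<Rightarrow> nat \<Rightarrow> nat" where
  "threshold b c q = (LEAST n. has_bc_coloring b c n q)"

end

theory Submission
  imports Defs "HOL-Number_Theory.Cong"
begin

text \<open>A \<open>(b, c)\<close>-colouring \<open>f\<close> of \<open>H(n, q)\<close> makes \<open>w = b\<close> on colour 1, \<open>w = -c\<close> on colour 2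
  an eigenvector of the adjacency matrix with eigenvalue \<open>n(q - 1) - b - c\<close>. Writing the
  adjacency form as a sum of squared line sums minus \<open>n \<parallel>w\<parallel>\<^sup>2\<close> shows that this eigenvalue is
  at least \<open>-n\<close>, i.e.\ \<open>b + c \<le> n q\<close>; in the tight case all line sums of \<open>w\<close> vanish, so every
  line meets colour 1 in \<open>c / n\<close> points and \<open>n\<close> divides \<open>b\<close> and \<open>c\<close>.

  Conversely, if a syndrome map gives every vertex exactly \<open>m\<close> neighbours of each syndrome
  other than its own, colouring by membership of the syndrome in a set \<open>T\<close> is a
  \<open>(m |S - T|, m |T|)\<close>-colouring. The digit sum mod \<open>q\<close> on \<open>H(d, q)\<close> (\<open>m = d\<close>) settles
  part (1) with \<open>d = gcd b c\<close>; the syndrome of the \<open>q\<close>-ary Hamming code of length \<open>q + 1\<close>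
  (\<open>m = 1\<close>) settles part (2), where \<open>n = q\<close> is excluded because \<open>q\<close> would divide
  \<open>gcd b c = 1\<close>.\<close>

subsection \<open>The Hamming graph\<close>

lemma hamming_vertices_less: "x \<in> hamming_vertices n q \<Longrightarrow> j < n \<Longrightarrow> x j < q"
  unfolding hamming_vertices_def by blast

lemma hamming_vertices_fun_upd:
  "x \<in> hamming_vertices n q \<Longrightarrow> j < n \<Longrightarrow> a < q \<Longrightarrow> x(j := a) \<in> hamming_vertices n q"
  unfolding hamming_vertices_def by auto

lemma finite_hamming_vertices: "finite (hamming_vertices n q)"
proof (rule finite_subset)
  show "hamming_vertices n q
      \<subseteq> {x. \<forall>i. (i \<in> {..<n} \<longrightarrow> x i \<in> {..<q}) \<and> (i \<notin> {..<n} \<longrightarrow> x i = 0)}"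
    unfolding hamming_vertices_def by auto
qed (rule finite_set_of_finite_funs; simp)

lemma hamming_adj_iff:
  assumes "x \<in> hamming_vertices n q" "y \<in> hamming_vertices n q"
  shows "hamming_adj n x y \<longleftrightarrow> (\<exists>j<n. \<exists>a. a \<noteq> x j \<and> y = x(j := a))"
proof
  assume "hamming_adj n x y"
  then obtain j where j: "{i. i < n \<and> x i \<noteq> y i} = {j}"
    unfolding hamming_adj_def by (auto simp: card_1_singleton_iff)
  have "j \<in> {i. i < n \<and> x i \<noteq> y i}" using j by simp
  moreover have "y i = x i" if "i \<noteq> j" for i
  proof (cases "i < n")
    case True
    then have "i \<notin> {i. i < n \<and> x i \<noteq> y i}" using j that by simp
    then show ?thesis using True by simp
  next
    case False
    then show ?thesis using assms unfolding hamming_vertices_def by simp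
  qed
  ultimately show "\<exists>j<n. \<exists>a. a \<noteq> x j \<and> y = x(j := a)"
    by (intro exI[of _ j] exI[of _ "y j"] conjI ext) auto
next
  assume "\<exists>j<n. \<exists>a. a \<noteq> x j \<and> y = x(j := a)"
  then obtain j a where "j < n" "a \<noteq> x j" "y = x(j := a)" by blast
  then have "{i. i < n \<and> x i \<noteq> y i} = {j}" by auto
  then show "hamming_adj n x y" unfolding hamming_adj_def by simp
qed

definition hamming_moves :: "nat \<Rightarrow> nat \<Rightarrow> (nat \<Rightarrow> nat) \<Rightarrow> (nat \<times> nat) set" where
  "hamming_moves n q x = (SIGMA j:{..<n}. {..<q} - {x j})"

lemma card_hamming_moves:
  assumes "x \<in> hamming_vertices n q"
  shows "card (hamming_moves n q x) = n * (q - 1)"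
proof -
  have "card (hamming_moves n q x) = (\<Sum>j<n. card ({..<q} - {x j}))"
    unfolding hamming_moves_def by (rule card_SigmaI) auto
  also have "\<dots> = (\<Sum>j<n. q - 1)"
    using hamming_vertices_less[OF assms] by (intro sum.cong) auto
  finally show ?thesis by simp
qed

lemma bij_betw_hamming_moves:
  assumes "x \<in> hamming_vertices n q"
  shows "bij_betw (\<lambda>(j, a). x(j := a)) (hamming_moves n q x)
           {y \<in> hamming_vertices n q. hamming_adj n x y}"
proof (rule bij_betw_imageI)
  show "inj_on (\<lambda>(j, a). x(j := a)) (hamming_moves n q x)"
    by (auto simp: inj_on_def hamming_moves_def) (metis fun_upd_apply)+
  show "(\<lambda>(j, a). x(j := a)) ` hamming_moves n q x = {y \<in> hamming_vertices n q. hamming_adj n x y}"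
  proof (intro equalityI subsetI)
    fix y assume "y \<in> (\<lambda>(j, a). x(j := a)) ` hamming_moves n q x"
    then obtain j a where "j < n" "a < q" "a \<noteq> x j" "y = x(j := a)"
      unfolding hamming_moves_def by auto
    then show "y \<in> {y \<in> hamming_vertices n q. hamming_adj n x y}"
      using assms hamming_vertices_fun_upd hamming_adj_iff by fastforce
  next
    fix y assume y: "y \<in> {y \<in> hamming_vertices n q. hamming_adj n x y}"
    then obtain j a where "j < n" "a \<noteq> x j" "y = x(j := a)"
      using assms hamming_adj_iff by blast
    moreover have "a < q"
      using hamming_vertices_less[of y n q j] y \<open>j < n\<close> \<open>y = x(j := a)\<close> by auto
    ultimately show "y \<in> (\<lambda>(j, a). x(j := a)) ` hamming_moves n q x"
      unfolding hamming_moves_def by (intro image_eqI[of _ _ "(j, a)"]) auto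
  qed
qed

lemma card_hamming_neighbours:
  assumes "x \<in> hamming_vertices n q"
  shows "card {y \<in> hamming_vertices n q. hamming_adj n x y} = n * (q - 1)"
  using bij_betw_same_card[OF bij_betw_hamming_moves[OF assms]] card_hamming_moves[OF assms]
  by simp

lemma card_hamming_neighbours_filter:
  assumes "x \<in> hamming_vertices n q"
  shows "card {y \<in> hamming_vertices n q. hamming_adj n x y \<and> P y}
           = card {(j, a) \<in> hamming_moves n q x. P (x(j := a))}"
proof -
  let ?g = "\<lambda>(j, a). x(j := a)"
  let ?A = "{p \<in> hamming_moves n q x. P (?g p)}"
  have bij: "bij_betw ?g (hamming_moves n q x) {y \<in> hamming_vertices n q. hamming_adj n x y}"
    by (rule bij_betw_hamming_moves[OF assms])
  have "{y \<in> hamming_vertices n q. hamming_adj n x y \<and> P y} = ?g ` ?A"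
    unfolding Compr_image_eq[symmetric] bij_betw_imp_surj_on[OF bij] by simp
  moreover have "inj_on ?g ?A"
    using bij_betw_imp_inj_on[OF bij] by (rule inj_on_subset) blast
  moreover have "?A = {(j, a) \<in> hamming_moves n q x. P (x(j := a))}"
    by (simp add: case_prod_unfold)
  ultimately show ?thesis
    by (simp add: card_image)
qed

subsection \<open>The spectral bound\<close>

definition hamming_line_sum ::
    "nat \<Rightarrow> ((nat \<Rightarrow> nat) \<Rightarrow> 'a::comm_monoid_add) \<Rightarrow> nat \<Rightarrow> (nat \<Rightarrow> nat) \<Rightarrow> 'a" where
  "hamming_line_sum q h j x = (\<Sum>a<q. h (x(j := a)))"

lemma hamming_line_sum_fun_upd [simp]:
  "hamming_line_sum q h j (x(j := a)) = hamming_line_sum q h j x"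
  unfolding hamming_line_sum_def by simp

lemma sum_hamming_neighbours:
  fixes h :: "(nat \<Rightarrow> nat) \<Rightarrow> 'a::ab_group_add"
  assumes "x \<in> hamming_vertices n q"
  shows "(\<Sum>y \<in> {y \<in> hamming_vertices n q. hamming_adj n x y}. h y)
           = (\<Sum>j<n. hamming_line_sum q h j x - h x)"
proof -
  have "(\<Sum>y \<in> {y \<in> hamming_vertices n q. hamming_adj n x y}. h y)
      = (\<Sum>(j, a) \<in> hamming_moves n q x. h (x(j := a)))"
    using sum.reindex_bij_betw[OF bij_betw_hamming_moves[OF assms], of h]
    by (simp add: case_prod_unfold)
  also have "\<dots> = (\<Sum>j<n. \<Sum>a \<in> {..<q} - {x j}. h (x(j := a)))"
    unfolding hamming_moves_def by (rule sum.Sigma[symmetric]) auto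
  also have "\<dots> = (\<Sum>j<n. hamming_line_sum q h j x - h x)"
    using hamming_vertices_less[OF assms]
    by (intro sum.cong) (simp_all add: hamming_line_sum_def sum_diff1)
  finally show ?thesis .
qed

lemma sum_hamming_vertices_by_lines:
  assumes "j < n" "0 < q"
  shows "(\<Sum>x \<in> hamming_vertices n q. F x)
           = (\<Sum>z \<in> {z \<in> hamming_vertices n q. z j = 0}. \<Sum>a<q. F (z(j := a)))"
proof -
  let ?W = "{z \<in> hamming_vertices n q. z j = 0}"
  have "bij_betw (\<lambda>(z, a). z(j := a)) (?W \<times> {..<q}) (hamming_vertices n q)"
  proof (rule bij_betw_imageI)
    show "inj_on (\<lambda>(z, a). z(j := a)) (?W \<times> {..<q})"
    proof (rule inj_onI, clarify)
      fix z a z' a' assume "z j = 0" "z' j = 0" and upd: "z(j := a) = z'(j := a')"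
      then have "z = z(j := 0)" "z' = z'(j := 0)"
        by (auto simp: fun_eq_iff)
      moreover have "z(j := 0) = z'(j := 0)"
        using upd by (metis fun_upd_upd)
      ultimately have "z = z'" by metis
      moreover have "a = a'" using upd by (metis fun_upd_same)
      ultimately show "z = z' \<and> a = a'" ..
    qed
    show "(\<lambda>(z, a). z(j := a)) ` (?W \<times> {..<q}) = hamming_vertices n q"
    proof (intro equalityI subsetI)
      fix x assume x: "x \<in> hamming_vertices n q"
      then have "(x(j := 0), x j) \<in> ?W \<times> {..<q}"
        using assms hamming_vertices_fun_upd hamming_vertices_less by auto
      then show "x \<in> (\<lambda>(z, a). z(j := a)) ` (?W \<times> {..<q})"
        by (intro image_eqI[of _ _ "(x(j := 0), x j)"]) auto
    next
      fix x assume "x \<in> (\<lambda>(z, a). z(j := a)) ` (?W \<times> {..<q})"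
      then show "x \<in> hamming_vertices n q"
        using assms hamming_vertices_fun_upd by auto
    qed
  qed
  then have "(\<Sum>x \<in> hamming_vertices n q. F x) = (\<Sum>(z, a) \<in> ?W \<times> {..<q}. F (z(j := a)))"
    by (simp add: sum.reindex_bij_betw[symmetric] case_prod_unfold)
  then show ?thesis
    by (simp add: sum.cartesian_product)
qed

lemma sum_mult_hamming_line_sum:
  fixes h :: "(nat \<Rightarrow> nat) \<Rightarrow> 'a::comm_semiring_1"
  assumes "j < n" "0 < q"
  shows "(\<Sum>x \<in> hamming_vertices n q. h x * hamming_line_sum q h j x)
           = (\<Sum>z \<in> {z \<in> hamming_vertices n q. z j = 0}. (hamming_line_sum q h j z)\<^sup>2)"
  unfolding sum_hamming_vertices_by_lines[OF assms]
  by (simp add: power2_eq_square sum_distrib_right hamming_line_sum_def)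

lemma hamming_quadratic_form:
  fixes h :: "(nat \<Rightarrow> nat) \<Rightarrow> 'a::comm_ring_1"
  assumes "0 < q"
  shows "(\<Sum>x \<in> hamming_vertices n q. h x * (\<Sum>y \<in> {y \<in> hamming_vertices n q. hamming_adj n x y}. h y))
           = (\<Sum>j<n. \<Sum>z \<in> {z \<in> hamming_vertices n q. z j = 0}. (hamming_line_sum q h j z)\<^sup>2)
             - of_nat n * (\<Sum>x \<in> hamming_vertices n q. (h x)\<^sup>2)"
proof -
  let ?V = "hamming_vertices n q"
  have "h x * (\<Sum>y \<in> {y \<in> ?V. hamming_adj n x y}. h y)
      = (\<Sum>j<n. h x * hamming_line_sum q h j x) - of_nat n * (h x)\<^sup>2" if "x \<in> ?V" for x
    unfolding sum_hamming_neighbours[OF that] sum_subtractf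
    by (simp add: right_diff_distrib power2_eq_square sum_distrib_left)
  then have "(\<Sum>x \<in> ?V. h x * (\<Sum>y \<in> {y \<in> ?V. hamming_adj n x y}. h y))
      = (\<Sum>x \<in> ?V. \<Sum>j<n. h x * hamming_line_sum q h j x) - of_nat n * (\<Sum>x \<in> ?V. (h x)\<^sup>2)"
    by (simp add: sum_subtractf sum_distrib_left)
  also have "(\<Sum>x \<in> ?V. \<Sum>j<n. h x * hamming_line_sum q h j x)
      = (\<Sum>j<n. \<Sum>x \<in> ?V. h x * hamming_line_sum q h j x)"
    by (rule sum.swap)
  also have "\<dots> = (\<Sum>j<n. \<Sum>z \<in> {z \<in> ?V. z j = 0}. (hamming_line_sum q h j z)\<^sup>2)"
    by (intro sum.cong refl sum_mult_hamming_line_sum assms) simp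
  finally show ?thesis .
qed

lemma bc_coloring_values:
  assumes "is_bc_coloring b c n q f" "x \<in> hamming_vertices n q"
  shows "f x = 1 \<or> f x = 2"
  using assms unfolding is_bc_coloring_def by blast

lemma bc_coloring_colour_exists:
  assumes "is_bc_coloring b c n q f" "k \<in> {1, 2}"
  obtains x where "x \<in> hamming_vertices n q" "f x = k"
proof -
  have "k \<in> f ` hamming_vertices n q"
    using assms unfolding is_bc_coloring_def by simp
  then show thesis using that by blast
qed

lemma bc_coloring_dims_pos:
  assumes col: "is_bc_coloring b c n q f"
  shows "0 < n" "0 < q"
proof -
  obtain x where x: "x \<in> hamming_vertices n q" "f x = 1"
    using bc_coloring_colour_exists[OF col, of 1] by blast
  obtain y where y: "y \<in> hamming_vertices n q" "f y = 2"
    using bc_coloring_colour_exists[OF col, of 2] by blast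
  have "x \<noteq> y" using x y by auto
  then obtain i where i: "x i \<noteq> y i" by (meson ext)
  have "i < n"
  proof (rule ccontr)
    assume "\<not> i < n"
    then have "x i = 0" "y i = 0"
      using x(1) y(1) unfolding hamming_vertices_def by simp_all
    with i show False by simp
  qed
  then show "0 < n" "0 < q"
    using hamming_vertices_less[OF x(1)] by fastforce+
qed

definition bc_weight :: "nat \<Rightarrow> nat \<Rightarrow> ((nat \<Rightarrow> nat) \<Rightarrow> nat) \<Rightarrow> (nat \<Rightarrow> nat) \<Rightarrow> int" where
  "bc_weight b c f x = (if f x = 1 then int b else - int c)"

lemma bc_weight_eigenvector:
  assumes col: "is_bc_coloring b c n q f" and x: "x \<in> hamming_vertices n q"
  shows "(\<Sum>y \<in> {y \<in> hamming_vertices n q. hamming_adj n x y}. bc_weight b c f y)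
           = (int (n * (q - 1)) - int b - int c) * bc_weight b c f x"
proof -
  let ?N = "\<lambda>k. {y \<in> hamming_vertices n q. hamming_adj n x y \<and> f y = k}"
  have N: "{y \<in> hamming_vertices n q. hamming_adj n x y} = ?N 1 \<union> ?N 2"
    using bc_coloring_values[OF col] by auto
  have fin: "finite (?N k)" for k
    using finite_hamming_vertices by simp
  have disj: "?N 1 \<inter> ?N 2 = {}" by auto
  have card: "card (?N 1) + card (?N 2) = n * (q - 1)"
    using card_hamming_neighbours[OF x] card_Un_disjoint[OF fin fin disj] N by simp
  have "(\<Sum>y \<in> {y \<in> hamming_vertices n q. hamming_adj n x y}. bc_weight b c f y)
      = (\<Sum>y \<in> ?N 1. bc_weight b c f y) + (\<Sum>y \<in> ?N 2. bc_weight b c f y)"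
    unfolding N by (rule sum.union_disjoint[OF fin fin disj])
  also have "\<dots> = (\<Sum>y \<in> ?N 1. int b) + (\<Sum>y \<in> ?N 2. - int c)"
    by (intro arg_cong2[where f = "(+)"] sum.cong) (auto simp: bc_weight_def)
  finally have sum: "(\<Sum>y \<in> {y \<in> hamming_vertices n q. hamming_adj n x y}. bc_weight b c f y)
      = int (card (?N 1)) * int b - int (card (?N 2)) * int c"
    by simp
  from bc_coloring_values[OF col x] show ?thesis
  proof
    assume fx: "f x = 1"
    then have "card (?N 2) = b"
      using col x unfolding is_bc_coloring_def by blast
    moreover from this have "int (card (?N 1)) = int (n * (q - 1)) - int b"
      using card by linarith
    moreover have "bc_weight b c f x = int b" using fx by (simp add: bc_weight_def)
    ultimately show ?thesis
      unfolding sum by (simp only:) (simp add: algebra_simps)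
  next
    assume fx: "f x = 2"
    then have "card (?N 1) = c"
      using col x unfolding is_bc_coloring_def by blast
    moreover from this have "int (card (?N 2)) = int (n * (q - 1)) - int c"
      using card by linarith
    moreover have "bc_weight b c f x = - int c" using fx by (simp add: bc_weight_def)
    ultimately show ?thesis
      unfolding sum by (simp only:) (simp add: algebra_simps)
  qed
qed

lemma bc_coloring_energy:
  assumes col: "is_bc_coloring b c n q f"
  shows "(int (n * q) - int b - int c) * (\<Sum>x \<in> hamming_vertices n q. (bc_weight b c f x)\<^sup>2)
           = (\<Sum>j<n. \<Sum>z \<in> {z \<in> hamming_vertices n q. z j = 0}.
                (hamming_line_sum q (bc_weight b c f) j z)\<^sup>2)"
proof -
  let ?w = "bc_weight b c f" and ?V = "hamming_vertices n q"
  let ?H = "\<Sum>x \<in> ?V. (?w x)\<^sup>2"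
  have q: "0 < q" using bc_coloring_dims_pos[OF col] by simp
  have "(\<Sum>x \<in> ?V. ?w x * (\<Sum>y \<in> {y \<in> ?V. hamming_adj n x y}. ?w y))
      = (\<Sum>x \<in> ?V. (int (n * (q - 1)) - int b - int c) * (?w x)\<^sup>2)"
    by (intro sum.cong refl) (simp add: bc_weight_eigenvector[OF col] power2_eq_square)
  also have "\<dots> = (int (n * (q - 1)) - int b - int c) * ?H"
    by (simp add: sum_distrib_left)
  finally have "(int (n * (q - 1)) - int b - int c) * ?H
      = (\<Sum>j<n. \<Sum>z \<in> {z \<in> ?V. z j = 0}. (hamming_line_sum q ?w j z)\<^sup>2) - int n * ?H"
    unfolding hamming_quadratic_form[OF q] by simp
  moreover have "int (n * q) = int (n * (q - 1)) + int n"
    using q by (simp add: of_nat_diff algebra_simps)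
  ultimately show ?thesis
    by algebra
qed

theorem bc_coloring_sum_le:
  assumes col: "is_bc_coloring b c n q f"
  shows "b + c \<le> n * q"
proof (cases "b + c = 0")
  case False
  let ?w = "bc_weight b c f" and ?V = "hamming_vertices n q"
  obtain x where x: "x \<in> ?V" "?w x \<noteq> 0"
  proof (cases "b = 0")
    case True
    obtain x where "x \<in> ?V" "f x = 2"
      using bc_coloring_colour_exists[OF col, of 2] by blast
    moreover have "c \<noteq> 0" using True False by simp
    ultimately show ?thesis
      using that[of x] by (simp add: bc_weight_def)
  next
    case False
    obtain x where "x \<in> ?V" "f x = 1"
      using bc_coloring_colour_exists[OF col, of 1] by blast
    with False show ?thesis
      using that[of x] by (simp add: bc_weight_def)
  qed
  then have "0 < (\<Sum>x \<in> ?V. (?w x)\<^sup>2)"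
    by (intro sum_pos2[OF finite_hamming_vertices x(1)]) auto
  moreover have "0 \<le> (int (n * q) - int b - int c) * (\<Sum>x \<in> ?V. (?w x)\<^sup>2)"
    unfolding bc_coloring_energy[OF col] by (intro sum_nonneg) auto
  ultimately have "0 \<le> int (n * q) - int b - int c"
    by (simp add: zero_le_mult_iff)
  then show ?thesis by linarith
qed simp

lemma bc_coloring_tight_line_sum:
  assumes col: "is_bc_coloring b c n q f" and tight: "b + c = n * q"
    and x: "x \<in> hamming_vertices n q" and j: "j < n"
  shows "hamming_line_sum q (bc_weight b c f) j x = 0"
proof -
  let ?Q = "\<lambda>j. \<Sum>z \<in> {z \<in> hamming_vertices n q. z j = 0}. (hamming_line_sum q (bc_weight b c f) j z)\<^sup>2"
  have "int (n * q) = int b + int c"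
    using tight by (metis of_nat_add)
  then have "(\<Sum>j<n. ?Q j) = 0"
    using bc_coloring_energy[OF col] by simp
  then have "?Q j = 0"
    using j by (subst (asm) sum_nonneg_eq_0_iff) (auto intro: sum_nonneg)
  moreover have "x(j := 0) \<in> {z \<in> hamming_vertices n q. z j = 0}"
    using hamming_vertices_fun_upd[OF x j] bc_coloring_dims_pos[OF col] by simp
  ultimately have "(hamming_line_sum q (bc_weight b c f) j (x(j := 0)))\<^sup>2 = 0"
    using finite_hamming_vertices by (subst (asm) sum_nonneg_eq_0_iff) auto
  then show ?thesis by simp
qed

theorem bc_coloring_tight_dvd:
  assumes col: "is_bc_coloring b c n q f" and tight: "b + c = n * q"
  shows "n dvd b \<and> n dvd c"
proof -
  have n: "0 < n" and q: "0 < q" using bc_coloring_dims_pos[OF col] by auto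
  define z :: "nat \<Rightarrow> nat" where "z = (\<lambda>_. 0)"
  define S where "S = {a \<in> {..<q}. f (z(0 := a)) = 1}"
  have z: "z \<in> hamming_vertices n q" unfolding z_def hamming_vertices_def using q by simp
  have S: "S \<subseteq> {..<q}" "finite S" "card S \<le> q"
    unfolding S_def using card_mono[of "{..<q}" "{a \<in> {..<q}. f (z(0 := a)) = 1}"] by auto
  have "hamming_line_sum q (bc_weight b c f) 0 z = (\<Sum>a \<in> S. int b) + (\<Sum>a \<in> {..<q} - S. - int c)"
    unfolding hamming_line_sum_def bc_weight_def sum.If_cases[OF finite_lessThan]
    by (intro arg_cong2[where f = "(+)"] sum.cong) (auto simp: S_def)
  also have "\<dots> = int (card S) * int b - (int q - int (card S)) * int c"
    using S by (simp add: card_Diff_subset of_nat_diff)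
  finally have "int (card S) * (int b + int c) = int q * int c"
    using bc_coloring_tight_line_sum[OF col tight z n] by (simp add: algebra_simps)
  then have "card S * n * q = q * c"
    using tight by (simp add: algebra_simps flip: of_nat_add of_nat_mult)
  then have "c = card S * n"
    using q by simp
  then have "n dvd c" by simp
  moreover from this have "n dvd b"
    using tight by (metis dvd_add_left_iff dvd_triv_left)
  ultimately show ?thesis by simp
qed

subsection \<open>Colourings from syndromes\<close>

lemma card_fibre_eq_1:
  assumes inj: "inj_on g A" and "g ` A \<subseteq> B" "card A = card B" "finite B" "\<sigma> \<in> B"
  shows "card {a \<in> A. g a = \<sigma>} = 1"
proof -
  have "card (g ` A) = card B"
    using card_image[OF inj] assms(3) by simp
  then have "g ` A = B"
    using card_subset_eq[OF assms(4) assms(2)] by simp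
  then obtain a where a: "a \<in> A" "g a = \<sigma>"
    using \<open>\<sigma> \<in> B\<close> by blast
  then have "{a \<in> A. g a = \<sigma>} = {a}"
    using inj unfolding inj_on_def by auto
  then show ?thesis by simp
qed

lemma has_bc_coloring_of_syndrome:
  fixes s :: "(nat \<Rightarrow> nat) \<Rightarrow> 'a"
  assumes range: "\<And>x. x \<in> hamming_vertices n q \<Longrightarrow> s x \<in> S" and "finite S"
    and fibres: "\<And>x \<sigma>. x \<in> hamming_vertices n q \<Longrightarrow> \<sigma> \<in> S \<Longrightarrow> \<sigma> \<noteq> s x \<Longrightarrow>
                   card {y \<in> hamming_vertices n q. hamming_adj n x y \<and> s y = \<sigma>} = m"
    and "0 < m" and T: "T \<subseteq> S" "T \<noteq> {}" "T \<noteq> S"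
    and x0: "x0 \<in> hamming_vertices n q"
  shows "has_bc_coloring (m * card (S - T)) (m * card T) n q"
proof -
  let ?V = "hamming_vertices n q"
  have nbrs: "card {y \<in> ?V. hamming_adj n x y \<and> s y \<in> R} = m * card R"
    if x: "x \<in> ?V" and R: "R \<subseteq> S" "s x \<notin> R" for x R
  proof -
    have "card {y \<in> ?V. hamming_adj n x y \<and> s y \<in> R}
        = card (\<Union>\<sigma> \<in> R. {y \<in> ?V. hamming_adj n x y \<and> s y = \<sigma>})"
      by (intro arg_cong[where f = card]) auto
    also have "\<dots> = (\<Sum>\<sigma> \<in> R. card {y \<in> ?V. hamming_adj n x y \<and> s y = \<sigma>})"
      using finite_subset[OF R(1) \<open>finite S\<close>] finite_hamming_vertices
      by (intro card_UN_disjoint) auto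
    also have "\<dots> = (\<Sum>\<sigma> \<in> R. m)"
      using R by (intro sum.cong refl fibres[OF x]) auto
    finally show ?thesis by simp
  qed
  have hit: "\<exists>y \<in> ?V. s y \<in> R" if R: "R \<subseteq> S" "R \<noteq> {}" for R
  proof (cases "s x0 \<in> R")
    case False
    then have "card {y \<in> ?V. hamming_adj n x0 y \<and> s y \<in> R} \<noteq> 0"
      using nbrs[OF x0 R(1)] \<open>0 < m\<close> R finite_subset[OF R(1) \<open>finite S\<close>] by simp
    then show ?thesis by (metis (no_types, lifting) card.empty empty_Collect_eq)
  qed (use x0 in blast)
  define f where "f x = (if s x \<in> T then 1 else 2 :: nat)" for x
  have "is_bc_coloring (m * card (S - T)) (m * card T) n q f"
    unfolding is_bc_coloring_def
  proof (intro conjI ballI impI)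
    show "f ` ?V = {1, 2}"
      using hit[OF T(1,2)] hit[of "S - T"] T by (auto simp: f_def image_iff split: if_splits)
  next
    fix x assume x: "x \<in> ?V" and "f x = 1"
    then have "s x \<notin> S - T" by (simp add: f_def split: if_splits)
    then have "card {y \<in> ?V. hamming_adj n x y \<and> s y \<in> S - T} = m * card (S - T)"
      by (rule nbrs[OF x Diff_subset])
    moreover have "{y \<in> ?V. hamming_adj n x y \<and> f y = 2} = {y \<in> ?V. hamming_adj n x y \<and> s y \<in> S - T}"
      using range by (auto simp: f_def)
    ultimately show "card {y \<in> ?V. hamming_adj n x y \<and> f y = 2} = m * card (S - T)"
      by simp
  next
    fix x assume x: "x \<in> ?V" and "f x = 2"
    then have "s x \<notin> T" by (simp add: f_def split: if_splits)
    moreover have "{y \<in> ?V. hamming_adj n x y \<and> f y = 1} = {y \<in> ?V. hamming_adj n x y \<and> s y \<in> T}"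
      by (auto simp: f_def)
    ultimately show "card {y \<in> ?V. hamming_adj n x y \<and> f y = 1} = m * card T"
      using nbrs[OF x T(1)] by simp
  qed
  then show ?thesis unfolding has_bc_coloring_def by blast
qed

lemma int_cong_less_imp_eq: "[int a = int b] (mod int q) \<Longrightarrow> a < q \<Longrightarrow> b < q \<Longrightarrow> a = b"
  by (simp add: cong_int_iff cong_less_modulus_unique_nat)

definition linear_syndrome :: "nat \<Rightarrow> nat \<Rightarrow> (nat \<Rightarrow> nat) \<Rightarrow> (nat \<Rightarrow> nat) \<Rightarrow> nat" where
  "linear_syndrome n q w x = (\<Sum>i<n. w i * x i) mod q"

lemma linear_syndrome_less: "0 < q \<Longrightarrow> linear_syndrome n q w x < q"
  unfolding linear_syndrome_def by simp

lemma sum_weighted_fun_upd: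
  fixes w x :: "nat \<Rightarrow> nat"
  assumes "j < n"
  shows "int (\<Sum>i<n. w i * (x(j := a)) i) = int (\<Sum>i<n. w i * x i) + int (w j) * (int a - int (x j))"
proof -
  have j: "j \<in> {..<n}" using assms by simp
  have "(\<Sum>i \<in> {..<n} - {j}. w i * (x(j := a)) i) = (\<Sum>i \<in> {..<n} - {j}. w i * x i)"
    by (intro sum.cong) auto
  then have "(\<Sum>i<n. w i * (x(j := a)) i) = w j * a + (\<Sum>i \<in> {..<n} - {j}. w i * x i)"
    using sum.remove[OF finite_lessThan j, of "\<lambda>i. w i * (x(j := a)) i"] by simp
  moreover have "(\<Sum>i<n. w i * x i) = w j * x j + (\<Sum>i \<in> {..<n} - {j}. w i * x i)"
    by (rule sum.remove[OF finite_lessThan j])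
  ultimately show ?thesis by (simp add: algebra_simps)
qed

lemma linear_syndrome_fun_upd_eq_iff:
  assumes "j < n" "j' < n"
  shows "linear_syndrome n q w (x(j := a)) = linear_syndrome n q w (x(j' := a'))
           \<longleftrightarrow> [int (w j) * (int a - int (x j)) = int (w j') * (int a' - int (x j'))] (mod int q)"
  unfolding linear_syndrome_def cong_def[symmetric] cong_int_iff[symmetric]
    sum_weighted_fun_upd[OF assms(1)] sum_weighted_fun_upd[OF assms(2)]
  by (rule cong_add_lcancel)

lemma card_neighbours_digit_sum:
  fixes n q \<sigma> :: nat
  defines "s \<equiv> linear_syndrome n q (\<lambda>_. 1)"
  assumes x: "x \<in> hamming_vertices n q" and \<sigma>: "\<sigma> < q" "\<sigma> \<noteq> s x"
  shows "card {y \<in> hamming_vertices n q. hamming_adj n x y \<and> s y = \<sigma>} = n"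
proof -
  have line: "card {a \<in> {..<q} - {x j}. s (x(j := a)) = \<sigma>} = 1" if j: "j < n" for j
  proof -
    have "{a \<in> {..<q} - {x j}. s (x(j := a)) = \<sigma>} = {a \<in> {..<q}. s (x(j := a)) = \<sigma>}"
      using \<sigma>(2) by auto
    moreover have "card {a \<in> {..<q}. s (x(j := a)) = \<sigma>} = 1"
    proof (rule card_fibre_eq_1)
      show "inj_on (\<lambda>a. s (x(j := a))) {..<q}"
      proof (rule inj_onI)
        fix a a' assume "a \<in> {..<q}" "a' \<in> {..<q}" "s (x(j := a)) = s (x(j := a'))"
        moreover from this have "[int a - int (x j) = int a' - int (x j)] (mod int q)"
          by (simp add: s_def linear_syndrome_fun_upd_eq_iff[OF j j])
        then have "[int a = int a'] (mod int q)"
          by (simp add: cong_iff_dvd_diff)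
        ultimately show "a = a'"
          by (simp add: int_cong_less_imp_eq)
      qed
      show "(\<lambda>a. s (x(j := a))) ` {..<q} \<subseteq> {..<q}"
        using \<sigma> by (auto simp: s_def linear_syndrome_less)
    qed (use \<sigma> in auto)
    ultimately show ?thesis by simp
  qed
  have "card {y \<in> hamming_vertices n q. hamming_adj n x y \<and> s y = \<sigma>}
      = card (SIGMA j:{..<n}. {a \<in> {..<q} - {x j}. s (x(j := a)) = \<sigma>})"
    unfolding card_hamming_neighbours_filter[OF x] hamming_moves_def
    by (intro arg_cong[where f = card]) auto
  also have "\<dots> = (\<Sum>j<n. card {a \<in> {..<q} - {x j}. s (x(j := a)) = \<sigma>})"
    by (rule card_SigmaI) auto
  also have "\<dots> = n"
    using line by simp
  finally show ?thesis .
qed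

text \<open>The syndrome of the \<open>q\<close>-ary Hamming code of length \<open>q + 1\<close>: its parity check matrix has
  the columns \<open>(1, i)\<close> for \<open>i < q\<close> and \<open>(0, 1)\<close>, one for each point of the projective line.\<close>
definition hamming_check_u :: "nat \<Rightarrow> nat \<Rightarrow> nat" where
  "hamming_check_u q i = (if i < q then 1 else 0)"

definition hamming_check_w :: "nat \<Rightarrow> nat \<Rightarrow> nat" where
  "hamming_check_w q i = (if i < q then i else 1)"

definition hamming_code_syndrome :: "nat \<Rightarrow> (nat \<Rightarrow> nat) \<Rightarrow> nat \<times> nat" where
  "hamming_code_syndrome q x =
     (linear_syndrome (q + 1) q (hamming_check_u q) x, linear_syndrome (q + 1) q (hamming_check_w q) x)"

lemma hamming_check_columns_independent:
  fixes t t' :: int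
  assumes p: "prime q" and j: "j \<le> q" "j' \<le> q" and t: "\<not> [t = 0] (mod int q)"
    and u: "[int (hamming_check_u q j) * t = int (hamming_check_u q j') * t'] (mod int q)"
    and w: "[int (hamming_check_w q j) * t = int (hamming_check_w q j') * t'] (mod int q)"
  shows "j = j' \<and> [t = t'] (mod int q)"
proof (cases "j < q"; cases "j' < q")
  assume jq: "j < q" and j'q: "j' < q"
  then have tt': "[t = t'] (mod int q)"
    using u by (simp add: hamming_check_u_def)
  then have t': "\<not> [t' = 0] (mod int q)"
    using t cong_trans by blast
  have "[int j * t' = int j * t] (mod int q)"
    using tt' by (simp add: cong_scalar_left cong_sym)
  moreover have "[int j * t = int j' * t'] (mod int q)"
    using w jq j'q by (simp add: hamming_check_w_def)
  ultimately have "[int j * t' = int j' * t'] (mod int q)"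
    by (rule cong_trans)
  then have "int q dvd (int j - int j') * t'"
    by (simp add: cong_iff_dvd_diff left_diff_distrib)
  moreover have "prime (int q)"
    using p by simp
  ultimately have "int q dvd int j - int j'"
    using t' by (simp add: prime_dvd_mult_iff cong_0_iff)
  then have "[j = j'] (mod q)"
    by (simp add: cong_iff_dvd_diff flip: cong_int_iff)
  then have "j = j'"
    using jq j'q by (rule cong_less_modulus_unique_nat)
  with tt' show ?thesis by simp
next
  assume "j < q" "\<not> j' < q"
  then show ?thesis
    using u t by (simp add: hamming_check_u_def)
next
  assume jq: "\<not> j < q" and j'q: "j' < q"
  then have "[0 = t'] (mod int q)"
    using u by (simp add: hamming_check_u_def)
  then have "[0 = int j' * t'] (mod int q)"
    using cong_scalar_left[of 0 t' "int q" "int j'"] by simp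
  moreover have "[t = int j' * t'] (mod int q)"
    using w jq j'q by (simp add: hamming_check_w_def)
  ultimately have "[t = 0] (mod int q)"
    using cong_sym cong_trans by blast
  with t show ?thesis by simp
next
  assume "\<not> j < q" "\<not> j' < q"
  then show ?thesis
    using j w by (simp add: hamming_check_w_def)
qed

lemma card_neighbours_hamming_code_syndrome:
  assumes p: "prime q" and x: "x \<in> hamming_vertices (q + 1) q"
    and \<sigma>: "\<sigma> \<in> {..<q} \<times> {..<q}" "\<sigma> \<noteq> hamming_code_syndrome q x"
  shows "card {y \<in> hamming_vertices (q + 1) q. hamming_adj (q + 1) x y
                 \<and> hamming_code_syndrome q y = \<sigma>} = 1"
proof -
  let ?s = "hamming_code_syndrome q" and ?M = "hamming_moves (q + 1) q x"
  let ?g = "\<lambda>(j, a). ?s (x(j := a))"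
  have q: "1 < q" using p prime_gt_1_nat by blast
  have move: "j \<le> q" "a < q" "\<not> [int a - int (x j) = 0] (mod int q)" if "(j, a) \<in> ?M" for j a
  proof -
    show "j \<le> q" "a < q" using that unfolding hamming_moves_def by auto
    have "a \<noteq> x j" "x j < q"
      using that hamming_vertices_less[OF x, of j] unfolding hamming_moves_def by auto
    then show "\<not> [int a - int (x j) = 0] (mod int q)"
      using int_cong_less_imp_eq[of a "x j" q] \<open>a < q\<close> by (auto simp: cong_0_iff cong_iff_dvd_diff)
  qed
  have eq: "j = j' \<and> [int a - int (x j) = int a' - int (x j')] (mod int q)"
    if ja: "(j, a) \<in> ?M" and j': "j' \<le> q" and s: "?s (x(j := a)) = ?s (x(j' := a'))" for j a j' a'
  proof (rule hamming_check_columns_independent[OF p move(1)[OF ja] j' move(3)[OF ja]])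
    show "[int (hamming_check_u q j) * (int a - int (x j))
        = int (hamming_check_u q j') * (int a' - int (x j'))] (mod int q)"
         "[int (hamming_check_w q j) * (int a - int (x j))
        = int (hamming_check_w q j') * (int a' - int (x j'))] (mod int q)"
      using s move(1)[OF ja] j'
      by (simp_all add: hamming_code_syndrome_def linear_syndrome_fun_upd_eq_iff)
  qed
  have "inj_on ?g ?M"
  proof (rule inj_onI, clarify)
    fix j a j' a' assume ja: "(j, a) \<in> ?M" and ja': "(j', a') \<in> ?M"
      and s: "?s (x(j := a)) = ?s (x(j' := a'))"
    from eq[OF ja move(1)[OF ja'] s] have "j = j'" "[int a = int a'] (mod int q)"
      by (auto simp: cong_iff_dvd_diff)
    then show "j = j' \<and> a = a'"
      using move(2)[OF ja] move(2)[OF ja'] by (simp add: int_cong_less_imp_eq)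
  qed
  moreover have "?g ` ?M \<subseteq> {..<q} \<times> {..<q} - {?s x}"
  proof (rule image_subsetI)
    fix p assume "p \<in> ?M"
    then obtain j a where p: "p = (j, a)" and ja: "(j, a) \<in> ?M" by (cases p) auto
    have "?s (x(j := a)) \<noteq> ?s (x(j := x j))"
      using eq[OF ja move(1)[OF ja], of "x j"] move(3)[OF ja] by auto
    then show "?g p \<in> {..<q} \<times> {..<q} - {?s x}"
      unfolding p using q by (simp add: hamming_code_syndrome_def linear_syndrome_less)
  qed
  moreover have "card ?M = card ({..<q} \<times> {..<q} - {?s x})"
    using card_hamming_moves[OF x] q
    by (simp add: card_Diff_subset hamming_code_syndrome_def linear_syndrome_less algebra_simps)
  ultimately have "card {p \<in> ?M. ?g p = \<sigma>} = 1"
    using \<sigma> by (intro card_fibre_eq_1[where B = "{..<q} \<times> {..<q} - {?s x}"]) auto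
  then show ?thesis
    unfolding card_hamming_neighbours_filter[OF x] by (simp add: case_prod_unfold)
qed

lemma has_bc_coloring_digit_sum:
  assumes "0 < n" "0 < b" "0 < c" "b + c = q"
  shows "has_bc_coloring (n * b) (n * c) n q"
proof -
  have "has_bc_coloring (n * card ({..<q} - {..<c})) (n * card {..<c}) n q"
  proof (rule has_bc_coloring_of_syndrome[where s = "linear_syndrome n q (\<lambda>_. 1)"])
    show "linear_syndrome n q (\<lambda>_. 1) x \<in> {..<q}" for x
      using assms by (simp add: linear_syndrome_less)
    show "card {y \<in> hamming_vertices n q. hamming_adj n x y \<and> linear_syndrome n q (\<lambda>_. 1) y = \<sigma>} = n"
      if "x \<in> hamming_vertices n q" "\<sigma> \<in> {..<q}" "\<sigma> \<noteq> linear_syndrome n q (\<lambda>_. 1) x" for x \<sigma>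
      using card_neighbours_digit_sum that by simp
    show "(\<lambda>_. 0) \<in> hamming_vertices n q"
      using assms unfolding hamming_vertices_def by simp
  qed (use assms in auto)
  moreover have "card ({..<q} - {..<c}) = b"
    using assms(4) by simp
  ultimately show ?thesis by simp
qed

lemma has_bc_coloring_hamming_code:
  assumes p: "prime q" and "0 < c" "c < q\<^sup>2"
  shows "has_bc_coloring (q\<^sup>2 - c) c (q + 1) q"
proof -
  let ?S = "{..<q} \<times> {..<q}"
  have card_S: "card ?S = q\<^sup>2" by (simp add: power2_eq_square)
  obtain T where T: "T \<subseteq> ?S" "card T = c"
    using obtain_subset_with_card_n[of c ?S] assms card_S by auto
  have "has_bc_coloring (1 * card (?S - T)) (1 * card T) (q + 1) q"
  proof (rule has_bc_coloring_of_syndrome[where s = "hamming_code_syndrome q"])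
    show "hamming_code_syndrome q x \<in> ?S" for x
      using prime_gt_0_nat[OF p] by (simp add: hamming_code_syndrome_def linear_syndrome_less)
    show "card {y \<in> hamming_vertices (q + 1) q. hamming_adj (q + 1) x y
              \<and> hamming_code_syndrome q y = \<sigma>} = 1"
      if "x \<in> hamming_vertices (q + 1) q" "\<sigma> \<in> ?S" "\<sigma> \<noteq> hamming_code_syndrome q x" for x \<sigma>
      by (rule card_neighbours_hamming_code_syndrome[OF p that])
    show "(\<lambda>_. 0) \<in> hamming_vertices (q + 1) q"
      using prime_gt_0_nat[OF p] unfolding hamming_vertices_def by simp
  qed (use T assms card_S in auto)
  then show ?thesis
    using T card_S by (simp add: card_Diff_subset finite_subset)
qed

lemma threshold_eqI:
  assumes "has_bc_coloring b c n q" "\<And>m. has_bc_coloring b c m q \<Longrightarrow> n \<le> m"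
  shows "threshold b c q = n"
  unfolding threshold_def using assms by (intro Least_equality)

theorem threshold_eq_gcd:
  assumes "0 < b" "0 < c" "(b + c) div gcd b c = q"
  shows "threshold b c q = gcd b c"
proof -
  define d where "d = gcd b c"
  obtain b' c' where b': "b = d * b'" and c': "c = d * c'"
    unfolding d_def by (meson dvd_def gcd_dvd1 gcd_dvd2)
  have "0 < d"
    using assms(1) unfolding d_def by simp
  have "0 < b'" "0 < c'"
    using assms(1,2) b' c' by (metis gr0I mult_0_right)+
  moreover have "b' + c' = q"
    using assms(3) \<open>0 < d\<close> b' c' unfolding d_def[symmetric] by (simp flip: distrib_left)
  ultimately have "has_bc_coloring b c d q"
    using has_bc_coloring_digit_sum[OF \<open>0 < d\<close>] b' c' by simp
  moreover have "d \<le> m" if "has_bc_coloring b c m q" for m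
  proof -
    from that obtain f where "is_bc_coloring b c m q f"
      unfolding has_bc_coloring_def by blast
    then have "d * q \<le> m * q"
      using bc_coloring_sum_le b' c' \<open>b' + c' = q\<close> by (metis distrib_left)
    then show ?thesis
      using \<open>0 < b'\<close> \<open>b' + c' = q\<close> by simp
  qed
  ultimately show ?thesis
    unfolding d_def by (rule threshold_eqI)
qed

theorem threshold_eq_Suc:
  assumes p: "prime q" and "0 < b" "0 < c" and coprime: "gcd b c = 1" and "b + c = q\<^sup>2"
  shows "threshold b c q = q + 1"
proof -
  have q: "1 < q" using p prime_gt_1_nat by blast
  have "c < q\<^sup>2" "q\<^sup>2 - c = b"
    using \<open>0 < b\<close> \<open>b + c = q\<^sup>2\<close> by linarith+
  then have "has_bc_coloring b c (q + 1) q"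
    using has_bc_coloring_hamming_code[OF p \<open>0 < c\<close>] by simp
  moreover have "q + 1 \<le> m" if "has_bc_coloring b c m q" for m
  proof (rule ccontr)
    assume "\<not> q + 1 \<le> m"
    from that obtain f where col: "is_bc_coloring b c m q f"
      unfolding has_bc_coloring_def by blast
    then have "q * q \<le> m * q"
      using bc_coloring_sum_le[OF col] assms by (simp add: power2_eq_square)
    with \<open>\<not> q + 1 \<le> m\<close> q have "m = q" by simp
    then have "q dvd b \<and> q dvd c"
      using bc_coloring_tight_dvd[OF col] assms by (simp add: power2_eq_square)
    then have "q dvd gcd b c" by simp
    with coprime q show False by simp
  qed
  ultimately show ?thesis
    by (rule threshold_eqI)
qed

theorem corollary3:
  fixes q b c :: nat
  assumes "prime q" and "0 < b" and "0 < c"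
  shows "((b + c) div gcd b c = q \<longrightarrow> threshold b c q = gcd b c) \<and>
         (gcd b c = 1 \<and> b + c = q ^ 2 \<longrightarrow> threshold b c q = q + 1)"
proof (intro conjI impI)
  assume "(b + c) div gcd b c = q"
  then show "threshold b c q = gcd b c"
    by (rule threshold_eq_gcd[OF assms(2,3)])
next
  assume "gcd b c = 1 \<and> b + c = q ^ 2"
  then show "threshold b c q = q + 1"
    by (elim conjE) (rule threshold_eq_Suc[OF assms])
qed

end
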